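(* Let $m\ge1$, and for $k=1,\dots,m$ let $0<\lambda_k\le1$, $A_k\ge0$, $p_k\ge1$. Suppose $f\in C^1([0,\infty))$ and $g_k\in L^{p_k}_{loc}([0,\infty))$ satisfy $f\ge0$, $g_k\ge0$, \[ f'(t)\le\sum_{k=1}^m f(t)^{1-\lambda_k}g_k(t),\qquad \|g_k\|_{L^{p_k}([0,t])}\lesssim\langle t\rangle^{A_k} \] for all $t\ge0$. Then $f(t)\lesssim\langle t\rangle^{\Gamma}$ for all $t\ge0$, where $\Gamma=\max_{1\le k\le m}\frac{A_k+1/p_k'}{\lambda_k}$.
   Context: $\langle t\rangle=(1+|t|^2)^{1/2}$; $p_k'$ is the Hölder conjugate exponent of $p_k$ ($1/p_k+1/p_k'=1$). Implicit constants are independent of $t$. *)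

theory Defs
  imports "HOL-Analysis.Analysis"
begin

definition jbr :: "real \<Rightarrow> real" where
  "jbr t = sqrt (1 + t^2)"

text \<open>Real power of a nonnegative base with the convention x^0 = 1
  (Isabelle's powr has 0 powr 0 = 0).\<close>
definition rpow :: "real \<Rightarrow> real \<Rightarrow> real" where
  "rpow x a = (if a = 0 then 1 else x powr a)"

definition Lp_norm_0t :: "real \<Rightarrow> (real \<Rightarrow> real) \<Rightarrow> real \<Rightarrow> real" where
  "Lp_norm_0t p g t = (integral {0..t} (\<lambda>x. \<bar>g x\<bar> powr p)) powr (1 / p)"

end

theory Submission
  imports Defs
begin

text \<open>Fix \<open>T\<close> and let \<open>M = f s\<close> be the maximum of \<open>f\<close> on \<open>[0,T]\<close>. Integrating the differential
  inequality from \<open>0\<close> to \<open>s\<close> gives \<open>M \<le> f 0 + \<Sum>\<^sub>k M\<^bsup>1-\<lambda>\<^sub>k\<^esup> \<integral>\<^sub>0\<^sup>s g\<^sub>k\<close>, and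
  \<open>\<integral>\<^sub>0\<^sup>s g\<^sub>k \<lesssim> \<langle>T\<rangle>\<^bsup>A\<^sub>k + 1/p\<^sub>k'\<^esup>\<close>; instead of Hoelder's inequality this uses the pointwise
  bound \<open>g \<le> c + g\<^sup>p/c\<^bsup>p-1\<^esup>\<close> with \<open>c\<close> optimised, which also avoids proving that \<open>g\<^sub>k\<close> itself is
  integrable. Each summand is then either at most \<open>M/(m+1)\<close> or forces
  \<open>M \<lesssim> \<langle>T\<rangle>\<^bsup>(A\<^sub>k + 1/p\<^sub>k')/\<lambda>\<^sub>k\<^esup>\<close>; if all summands are small, \<open>M \<le> (m+1) f 0\<close>.\<close>

lemma rpow_nonneg: "0 \<le> rpow x a"
  by (simp add: rpow_def)

lemma rpow_eq_powr: "x \<noteq> 0 \<Longrightarrow> rpow x a = x powr a"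
  by (simp add: rpow_def)

lemma rpow_mono: "0 \<le> x \<Longrightarrow> x \<le> y \<Longrightarrow> 0 \<le> a \<Longrightarrow> rpow x a \<le> rpow y a"
  by (cases "a = 0") (auto simp: rpow_def intro: powr_mono2)

lemma jbr_ge_one: "1 \<le> jbr t"
  by (simp add: jbr_def)

lemma le_jbr: "t \<le> jbr t"
  by (simp add: jbr_def real_le_rsqrt)

lemma jbr_mono: "0 \<le> s \<Longrightarrow> s \<le> t \<Longrightarrow> jbr s \<le> jbr t"
  by (simp add: jbr_def power_mono)

lemma le_add_powr_div_powr:
  fixes a c p :: real
  assumes "0 \<le> a" "0 < c" "1 \<le> p"
  shows "a \<le> c + a powr p / c powr (p - 1)"
proof (cases "a \<le> c")
  case True
  then show ?thesis by (simp add: add_increasing2)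
next
  case False
  have "a * c powr (p - 1) \<le> a * a powr (p - 1)"
    using assms False by (intro mult_left_mono powr_mono2) auto
  also have "\<dots> = a powr p"
    using False assms by (simp add: powr_mult_base)
  finally have "a \<le> a powr p / c powr (p - 1)"
    using assms by (simp add: field_simps)
  then show ?thesis using assms by linarith
qed

definition majorized_integral_le :: "(real \<Rightarrow> real) \<Rightarrow> real set \<Rightarrow> real \<Rightarrow> bool" where
  "majorized_integral_le g S H \<longleftrightarrow> (\<exists>h I. (\<forall>x\<in>S. g x \<le> h x) \<and> (h has_integral I) S \<and> I \<le> H)"

lemma majorized_integral_le_Lp_norm:
  fixes g :: "real \<Rightarrow> real" and p N J s :: real
  assumes p: "1 \<le> p" and N: "0 < N" and J: "0 < J" and s: "0 \<le> s" "s \<le> J"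
    and int: "(\<lambda>x. \<bar>g x\<bar> powr p) integrable_on {0..s}"
    and norm: "Lp_norm_0t p g s \<le> N"
  shows "majorized_integral_le g {0..s} (2 * N * J powr (1 - 1 / p))"
proof -
  define I where "I = integral {0..s} (\<lambda>x. \<bar>g x\<bar> powr p)"
  \<comment> \<open>This \<open>c\<close> balances \<open>c s\<close> against \<open>I / c\<^bsup>p-1\<^esup>\<close> in the worst case \<open>s = J\<close>.\<close>
  define c where "c = N * J powr (- 1 / p)"
  have c: "0 < c" using N J by (simp add: c_def)
  have I: "0 \<le> I" unfolding I_def by (intro integral_nonneg int) simp
  have "I = (I powr (1 / p)) powr p" using p I by (simp add: powr_powr)
  also have "\<dots> \<le> N powr p"
    using p I norm by (intro powr_mono2) (auto simp: Lp_norm_0t_def I_def)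
  finally have "I / c powr (p - 1) \<le> N powr p / c powr (p - 1)"
    using c by (simp add: divide_right_mono)
  also have "\<dots> = N * J powr (1 - 1 / p)"
  proof -
    have "c powr (p - 1) = N powr (p - 1) * J powr - (1 - 1 / p)"
      using N J p by (simp add: c_def powr_mult powr_powr field_simps)
    moreover have "N powr p = N * N powr (p - 1)"
      using N by (simp add: powr_mult_base)
    ultimately show ?thesis
      using N J by (simp add: field_simps flip: powr_add)
  qed
  finally have second: "I / c powr (p - 1) \<le> N * J powr (1 - 1 / p)" .
  have "c * s \<le> c * J" using c s by simp
  also have "\<dots> = N * J powr (1 - 1 / p)"
    using J by (simp add: c_def powr_diff powr_minus field_simps)
  finally have first: "c * s \<le> N * J powr (1 - 1 / p)" .
  have "((\<lambda>x. c + \<bar>g x\<bar> powr p / c powr (p - 1)) has_integral c * s + I / c powr (p - 1)) {0..s}"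
    using has_integral_const_real[of c 0 s] int s unfolding I_def
    by (intro has_integral_add has_integral_divide) (auto simp: mult.commute)
  moreover have "\<forall>x\<in>{0..s}. g x \<le> c + \<bar>g x\<bar> powr p / c powr (p - 1)"
    using le_add_powr_div_powr[of "\<bar>g _\<bar>" c p] c p by (metis abs_ge_self abs_ge_zero order.trans)
  ultimately show ?thesis
    unfolding majorized_integral_le_def using first second by (intro exI conjI) auto
qed

lemma majorized_integral_le_jbr_growth:
  fixes g :: "real \<Rightarrow> real" and p A C s T :: real
  assumes p: "1 \<le> p" and A: "0 \<le> A" and s: "0 \<le> s" "s \<le> T"
    and int: "(\<lambda>x. \<bar>g x\<bar> powr p) integrable_on {0..s}"
    and norm: "Lp_norm_0t p g s \<le> C * jbr s powr A"
  shows "majorized_integral_le g {0..s} (2 * max C 1 * jbr T powr (A + (1 - 1 / p)))"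
proof -
  have "C * jbr s powr A \<le> max C 1 * jbr T powr A"
    using s A jbr_ge_one[of s] by (intro mult_mono powr_mono2 jbr_mono) auto
  then have "Lp_norm_0t p g s \<le> max C 1 * jbr T powr A"
    using norm by linarith
  then have "majorized_integral_le g {0..s} (2 * (max C 1 * jbr T powr A) * jbr T powr (1 - 1 / p))"
    using p s int le_jbr[of T] jbr_ge_one[of T]
    by (intro majorized_integral_le_Lp_norm) auto
  then show ?thesis
    by (simp add: powr_add mult.assoc)
qed

lemma integrated_sublinear_differential_inequality:
  fixes K :: "'i set" and f f' :: "real \<Rightarrow> real" and g :: "'i \<Rightarrow> real \<Rightarrow> real"
  assumes K: "finite K" and s: "0 \<le> s"
    and lam: "\<forall>k\<in>K. lam k \<le> 1"
    and deriv: "\<forall>t\<in>{0..s}. (f has_real_derivative f' t) (at t within {0..s})"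
    and ineq: "\<forall>t\<in>{0..s}. f' t \<le> (\<Sum>k\<in>K. rpow (f t) (1 - lam k) * g k t)"
    and f: "\<forall>t\<in>{0..s}. 0 \<le> f t \<and> f t \<le> M"
    and g: "\<forall>k\<in>K. \<forall>t\<in>{0..s}. 0 \<le> g k t"
    and maj: "\<forall>k\<in>K. majorized_integral_le (g k) {0..s} (H k)"
  shows "f s \<le> f 0 + (\<Sum>k\<in>K. rpow M (1 - lam k) * H k)"
proof -
  obtain h I where h: "\<forall>k\<in>K. \<forall>t\<in>{0..s}. g k t \<le> h k t"
    and hI: "\<forall>k\<in>K. (h k has_integral I k) {0..s}" and IH: "\<forall>k\<in>K. I k \<le> H k"
    using maj unfolding majorized_integral_le_def by metis
  have "(f' has_integral f s - f 0) {0..s}"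
    using s deriv by (intro fundamental_theorem_of_calculus)
      (auto simp: has_real_derivative_iff_has_vector_derivative[symmetric])
  moreover have "((\<lambda>t. \<Sum>k\<in>K. rpow M (1 - lam k) * h k t) has_integral
      (\<Sum>k\<in>K. rpow M (1 - lam k) * I k)) {0..s}"
    using hI by (intro has_integral_sum has_integral_mult_right K) auto
  moreover have "f' t \<le> (\<Sum>k\<in>K. rpow M (1 - lam k) * h k t)" if t: "t \<in> {0..s}" for t
  proof -
    have "rpow (f t) (1 - lam k) * g k t \<le> rpow M (1 - lam k) * h k t" if "k \<in> K" for k
      using that t f g h lam by (intro mult_mono rpow_mono rpow_nonneg) auto
    then show ?thesis
      using ineq t by (meson order.trans sum_mono)
  qed
  ultimately have "f s - f 0 \<le> (\<Sum>k\<in>K. rpow M (1 - lam k) * I k)"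
    by (rule has_integral_le)
  also have "\<dots> \<le> (\<Sum>k\<in>K. rpow M (1 - lam k) * H k)"
    using IH by (intro sum_mono mult_left_mono rpow_nonneg) auto
  finally show ?thesis by simp
qed

lemma rpow_mult_le_divide_or_le_powr:
  fixes lam M X n :: real
  assumes lam: "0 < lam" "lam \<le> 1" and M: "0 \<le> M" and X: "0 \<le> X" and n: "0 < n"
  shows "rpow M (1 - lam) * X \<le> M / n \<or> M \<le> (n * X) powr (1 / lam)"
proof (cases "M powr lam \<le> n * X")
  case True
  then have "(M powr lam) powr (1 / lam) \<le> (n * X) powr (1 / lam)"
    using lam by (intro powr_mono2) auto
  then show ?thesis using lam M by (simp add: powr_powr)
next
  case False
  then have M: "0 < M" using M X n by (cases "M = 0") auto
  have "rpow M (1 - lam) * X = M powr (1 - lam) * (n * X) / n"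
    using M n by (simp add: rpow_eq_powr)
  also have "\<dots> \<le> M powr (1 - lam) * M powr lam / n"
    using False n by (intro divide_right_mono mult_left_mono) auto
  also have "\<dots> = M / n"
    using M by (simp flip: powr_add)
  finally show ?thesis ..
qed

lemma absorb_sublinear_terms:
  fixes K :: "'i set" and lam X :: "'i \<Rightarrow> real" and M a :: real
  assumes K: "finite K" and lam: "\<forall>k\<in>K. 0 < lam k \<and> lam k \<le> 1" and X: "\<forall>k\<in>K. 0 \<le> X k"
    and M: "0 \<le> M" and a: "0 \<le> a"
    and le: "M \<le> a + (\<Sum>k\<in>K. rpow M (1 - lam k) * X k)"
  shows "M \<le> (real (card K) + 1) * a + (\<Sum>k\<in>K. ((real (card K) + 1) * X k) powr (1 / lam k))"
proof -
  define n where "n = real (card K) + 1"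
  have n: "0 < n" by (simp add: n_def)
  consider k where "k \<in> K" "M \<le> (n * X k) powr (1 / lam k)"
    | "\<forall>k\<in>K. rpow M (1 - lam k) * X k \<le> M / n"
    using rpow_mult_le_divide_or_le_powr lam X M n by meson
  then have "M \<le> n * a + (\<Sum>k\<in>K. (n * X k) powr (1 / lam k))"
  proof cases
    case 1
    then have "M \<le> (\<Sum>k\<in>K. (n * X k) powr (1 / lam k))"
      using K by (meson order.trans member_le_sum powr_ge_zero)
    then show ?thesis using n a by (simp add: add_increasing)
  next
    case 2
    then have "M \<le> a + card K * (M / n)"
      using le sum_mono[of K _ "\<lambda>_. M / n"] by fastforce
    then have "M \<le> n * a"
      using n by (simp add: n_def field_simps)
    then show ?thesis by (simp add: sum_nonneg add_increasing2)
  qed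
  then show ?thesis unfolding n_def .
qed

lemma powr_mult_powr_inverse_le:
  fixes x J lam e G :: real
  assumes x: "0 \<le> x" and J: "1 \<le> J" and lam: "0 < lam" and e: "e \<le> G * lam"
  shows "(x * J powr e) powr (1 / lam) \<le> x powr (1 / lam) * J powr G"
proof -
  have "(x * J powr e) powr (1 / lam) = x powr (1 / lam) * J powr (e / lam)"
    using x J by (simp add: powr_mult powr_powr)
  also have "\<dots> \<le> x powr (1 / lam) * J powr G"
    using J e lam by (intro mult_left_mono powr_mono) (auto simp: divide_le_eq)
  finally show ?thesis .
qed

lemma absorb_sublinear_terms_powr:
  fixes K :: "'i set" and lam D e :: "'i \<Rightarrow> real" and M a J G :: real
  assumes K: "finite K" and lam: "\<forall>k\<in>K. 0 < lam k \<and> lam k \<le> 1" and D: "\<forall>k\<in>K. 0 \<le> D k"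
    and J: "1 \<le> J" and G: "0 \<le> G" and e: "\<forall>k\<in>K. e k \<le> G * lam k"
    and M: "0 \<le> M" and a: "0 \<le> a"
    and le: "M \<le> a + (\<Sum>k\<in>K. rpow M (1 - lam k) * (D k * J powr e k))"
  shows "M \<le> ((real (card K) + 1) * a + (\<Sum>k\<in>K. ((real (card K) + 1) * D k) powr (1 / lam k))) * J powr G"
proof -
  define n where "n = real (card K) + 1"
  have n: "0 < n" by (simp add: n_def)
  have "M \<le> n * a + (\<Sum>k\<in>K. (n * D k * J powr e k) powr (1 / lam k))"
    using absorb_sublinear_terms[OF K lam _ M a le] D by (simp add: n_def mult.assoc)
  also have "\<dots> \<le> n * a * J powr G + (\<Sum>k\<in>K. (n * D k) powr (1 / lam k) * J powr G)"
  proof (intro add_mono sum_mono)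
    show "n * a \<le> n * a * J powr G"
      using n a J G mult_left_mono[of 1 "J powr G" "n * a"] by (simp add: ge_one_powr_ge_zero)
    show "(n * D k * J powr e k) powr (1 / lam k) \<le> (n * D k) powr (1 / lam k) * J powr G"
      if "k \<in> K" for k
      using that n D J lam e by (intro powr_mult_powr_inverse_le) auto
  qed
  finally show ?thesis
    by (simp add: n_def distrib_right sum_distrib_right)
qed

theorem lemma5p4:
  fixes m :: nat and lam A p :: "nat \<Rightarrow> real"
    and f f' :: "real \<Rightarrow> real" and g :: "nat \<Rightarrow> real \<Rightarrow> real"
  assumes m: "m \<ge> 1"
    and lam: "\<And>k. k \<in> {1..m} \<Longrightarrow> 0 < lam k \<and> lam k \<le> 1"
    and A: "\<And>k. k \<in> {1..m} \<Longrightarrow> A k \<ge> 0"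
    and p: "\<And>k. k \<in> {1..m} \<Longrightarrow> p k \<ge> 1"
    and f_deriv: "\<And>t. t \<ge> 0 \<Longrightarrow> (f has_real_derivative f' t) (at t within {0..})"
    and f'_cont: "continuous_on {0..} f'"
    and g_Lploc: "\<And>k t. k \<in> {1..m} \<Longrightarrow> t \<ge> 0 \<Longrightarrow>
                    (\<lambda>x. \<bar>g k x\<bar> powr p k) integrable_on {0..t}"
    and f_nonneg: "\<And>t. t \<ge> 0 \<Longrightarrow> f t \<ge> 0"
    and g_nonneg: "\<And>k t. k \<in> {1..m} \<Longrightarrow> t \<ge> 0 \<Longrightarrow> g k t \<ge> 0"
    and ineq: "\<And>t. t \<ge> 0 \<Longrightarrow> f' t \<le> (\<Sum>k=1..m. rpow (f t) (1 - lam k) * g k t)"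
    and g_bound: "\<And>k. k \<in> {1..m} \<Longrightarrow>
                    \<exists>C. \<forall>t\<ge>0. Lp_norm_0t (p k) (g k) t \<le> C * jbr t powr A k"
  shows "\<exists>C. \<forall>t\<ge>0. f t \<le> C * jbr t powr
           (Max ((\<lambda>k. (A k + (1 - 1 / p k)) / lam k) ` {1..m}))"
proof -
  define e where "e k = A k + (1 - 1 / p k)" for k
  define G where "G = Max ((\<lambda>k. e k / lam k) ` {1..m})"
  define n where "n = real (card {1..m}) + 1"
  obtain Cf where Cf: "\<forall>k\<in>{1..m}. \<forall>t\<ge>0. Lp_norm_0t (p k) (g k) t \<le> Cf k * jbr t powr A k"
    using g_bound by metis
  define C where "C = n * f 0 + (\<Sum>k\<in>{1..m}. (n * (2 * max (Cf k) 1)) powr (1 / lam k))"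
  have eG: "e k \<le> G * lam k" if "k \<in> {1..m}" for k
  proof -
    have "e k / lam k \<le> G"
      unfolding G_def using that by (intro Max_ge) auto
    then show ?thesis
      using lam[OF that] by (simp add: pos_divide_le_eq)
  qed
  have one: "1 \<in> {1..m}"
    using m by simp
  then have "1 / p 1 \<le> 1"
    using p[OF one] by simp
  then have "0 \<le> G * lam 1"
    using eG[OF one] A[OF one] by (simp add: e_def)
  then have G: "0 \<le> G"
    using lam[OF one] by (simp add: zero_le_mult_iff)
  have "f T \<le> C * jbr T powr G" if T: "0 \<le> T" for T
  proof -
    have "continuous_on {0..T} f"
      by (intro DERIV_continuous_on[of _ _ f']) (auto intro: has_field_derivative_subset[OF f_deriv])
    then obtain s where s: "s \<in> {0..T}" and s_max: "\<forall>t\<in>{0..T}. f t \<le> f s"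
      using continuous_attains_sup[of "{0..T}" f] T by auto
    have "majorized_integral_le (g k) {0..s} (2 * max (Cf k) 1 * jbr T powr e k)"
      if "k \<in> {1..m}" for k
      unfolding e_def using that s Cf by (intro majorized_integral_le_jbr_growth p A g_Lploc) auto
    \<comment> \<open>The gauge-integral FTC needs no continuity of \<open>f'\<close>.\<close>
    then have "f s \<le> f 0 + (\<Sum>k\<in>{1..m}. rpow (f s) (1 - lam k) * (2 * max (Cf k) 1 * jbr T powr e k))"
      using s s_max lam f_nonneg g_nonneg ineq
      by (intro integrated_sublinear_differential_inequality[where f' = f' and g = g])
        (auto intro: has_field_derivative_subset[OF f_deriv])
    then have "f s \<le> C * jbr T powr G"
      unfolding C_def n_def using s lam f_nonneg G eG jbr_ge_one[of T]
      by (intro absorb_sublinear_terms_powr) auto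
    moreover have "f T \<le> f s"
      using s_max T by simp
    ultimately show ?thesis
      by simp
  qed
  then show ?thesis
    unfolding G_def e_def by blast
qed

end
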